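(* Let $\kappa\ge2$ and let $P$ be a tensor in $\mathrm{EE}_\kappa(\psi^+)$ for $\psi^+=((a,b),c)$. Then for all $k\in[\kappa]$ the $\kappa\times\kappa$ matrices $$Q^a_{\cdot\cdot k}=P_{+\cdot\cdot}\operatorname{Cof}(P_{\cdot+\cdot})^TP_{\cdot\cdot k}\quad\text{and}\quad Q^b_{\cdot\cdot k}=P_{\cdot\cdot k}\operatorname{Cof}(P_{+\cdot\cdot})P_{\cdot+\cdot}^T$$ are symmetric.
   Context: A $\kappa$-state site pattern probability tensor on a taxon set $X$, $|X|=n$, is an $n$-way $\kappa\times\cdots\times\kappa$ array with one index per taxon, non-negative entries summing to 1. For $Y\subseteq X$, $P_Y$ is the marginalization to $Y$; $\psi^+|_Y$ the induced rooted subtree; a 2-clade is a pair of leaves that are exactly the leaf descendants of some vertex. $\mathrm{UE}_\kappa(\psi^+)$ is the set of such tensors $P$ such that for every $Y\subseteq X$ and every 2-clade $\{x,y\}$ of $\psi^+|_Y$, $P_Y$ is invariant under exchanging the $x$ and $y$ indices. For an $n$-way tensor $P$ and a $\kappa\times\kappa$ matrix $M$, $P*_kM$ is the tensor whose entry at $(i_1,\dots,i_n)$ is the $i_k$-th entry of the row vector $vM$, where $v$ is the vector obtained from $P$ by fixing the $\ell$-th index to $i_\ell$ for all $\ell\neq k$; and $P*(M_1,\dots,M_n)=(\cdots((P*_1M_1)*_2M_2)\cdots)*_nM_n$. The extended exchangeable model $\mathrm{EE}_\kappa(\psi^+)$ is the set of $\kappa$-state site pattern probability tensors $P$ on $X$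 for which there exist non-singular $\kappa\times\kappa$ Markov matrices $M_1,\dots,M_n$ and a non-negative array $\tilde P\in\mathrm{UE}_\kappa(\psi^+)$ with $P*(M_1,\dots,M_n)=\tilde P$. For a 3-way tensor $P=(p_{ijk})$ with indices ordered $a,b,c$: $P_{+\cdot\cdot}$ is the $\kappa\times\kappa$ matrix with $(j,k)$-entry $\sum_i p_{ijk}$; $P_{\cdot+\cdot}$ has $(i,k)$-entry $\sum_j p_{ijk}$; $P_{\cdot\cdot+}$ has $(i,j)$-entry $\sum_kp_{ijk}$; $P_{\cdot\cdot k}$ is the slice with $(i,j)$-entry $p_{ijk}$. $A^T$ is the transpose and $\operatorname{Cof}(A)$ is the matrix of cofactors of a square matrix $A$ (so $\operatorname{Cof}(A)^T$ is the adjugate of $A$). *)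

theory Defs
  imports "Jordan_Normal_Form.Determinant"
begin

(* States are 0..<\<kappa>; a 3-way tensor on taxa a,b,c (index order a,b,c) is a
   function nat \<Rightarrow> nat \<Rightarrow> nat \<Rightarrow> real, only entries with indices < \<kappa> matter. *)
type_synonym tensor3 = "nat \<Rightarrow> nat \<Rightarrow> nat \<Rightarrow> real"

definition prob_tensor3 :: "nat \<Rightarrow> tensor3 \<Rightarrow> bool" where
  "prob_tensor3 \<kappa> P \<longleftrightarrow>
     (\<forall>i<\<kappa>. \<forall>j<\<kappa>. \<forall>k<\<kappa>. 0 \<le> P i j k) \<and>
     (\<Sum>i<\<kappa>. \<Sum>j<\<kappa>. \<Sum>k<\<kappa>. P i j k) = 1"

definition markov_mat :: "nat \<Rightarrow> real mat \<Rightarrow> bool" where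
  "markov_mat \<kappa> M \<longleftrightarrow> M \<in> carrier_mat \<kappa> \<kappa> \<and>
     (\<forall>i<\<kappa>. \<forall>j<\<kappa>. 0 \<le> M $$ (i,j)) \<and>
     (\<forall>i<\<kappa>. (\<Sum>j<\<kappa>. M $$ (i,j)) = 1)"

definition act1 :: "nat \<Rightarrow> tensor3 \<Rightarrow> real mat \<Rightarrow> tensor3" where
  "act1 \<kappa> P M = (\<lambda>i j k. \<Sum>l<\<kappa>. P l j k * M $$ (l,i))"
definition act2 :: "nat \<Rightarrow> tensor3 \<Rightarrow> real mat \<Rightarrow> tensor3" where
  "act2 \<kappa> P M = (\<lambda>i j k. \<Sum>l<\<kappa>. P i l k * M $$ (l,j))"
definition act3 :: "nat \<Rightarrow> tensor3 \<Rightarrow> real mat \<Rightarrow> tensor3" where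
  "act3 \<kappa> P M = (\<lambda>i j k. \<Sum>l<\<kappa>. P i j l * M $$ (l,k))"

definition act_all :: "nat \<Rightarrow> tensor3 \<Rightarrow> real mat \<Rightarrow> real mat \<Rightarrow> real mat \<Rightarrow> tensor3" where
  "act_all \<kappa> P M1 M2 M3 = act3 \<kappa> (act2 \<kappa> (act1 \<kappa> P M1) M2) M3"

(* UE_\<kappa>(((a,b),c)), unfolded over all Y \<subseteq> {a,b,c}:
   Y = {a,b,c}: 2-clade {a,b};  Y = {a,b}: 2-clade {a,b};
   Y = {a,c}: 2-clade {a,c};    Y = {b,c}: 2-clade {b,c};
   |Y| \<le> 1: no 2-clades. *)
definition UE_abc :: "nat \<Rightarrow> tensor3 \<Rightarrow> bool" where
  "UE_abc \<kappa> P \<longleftrightarrow> prob_tensor3 \<kappa> P \<and>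
     (\<forall>i<\<kappa>. \<forall>j<\<kappa>. \<forall>k<\<kappa>. P i j k = P j i k) \<and>
     (\<forall>i<\<kappa>. \<forall>j<\<kappa>. (\<Sum>k<\<kappa>. P i j k) = (\<Sum>k<\<kappa>. P j i k)) \<and>
     (\<forall>i<\<kappa>. \<forall>k<\<kappa>. (\<Sum>j<\<kappa>. P i j k) = (\<Sum>j<\<kappa>. P k j i)) \<and>
     (\<forall>j<\<kappa>. \<forall>k<\<kappa>. (\<Sum>i<\<kappa>. P i j k) = (\<Sum>i<\<kappa>. P i k j))"

definition EE_abc :: "nat \<Rightarrow> tensor3 \<Rightarrow> bool" where
  "EE_abc \<kappa> P \<longleftrightarrow> prob_tensor3 \<kappa> P \<and>
     (\<exists>M1 M2 M3 Pt. markov_mat \<kappa> M1 \<and> det M1 \<noteq> 0 \<and>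
        markov_mat \<kappa> M2 \<and> det M2 \<noteq> 0 \<and>
        markov_mat \<kappa> M3 \<and> det M3 \<noteq> 0 \<and>
        UE_abc \<kappa> Pt \<and>
        (\<forall>i<\<kappa>. \<forall>j<\<kappa>. \<forall>k<\<kappa>. act_all \<kappa> P M1 M2 M3 i j k = Pt i j k))"

definition marg1 :: "nat \<Rightarrow> tensor3 \<Rightarrow> real mat" where
  "marg1 \<kappa> P = mat \<kappa> \<kappa> (\<lambda>(j,k). \<Sum>i<\<kappa>. P i j k)"
definition marg2 :: "nat \<Rightarrow> tensor3 \<Rightarrow> real mat" where
  "marg2 \<kappa> P = mat \<kappa> \<kappa> (\<lambda>(i,k). \<Sum>j<\<kappa>. P i j k)"
definition marg3 :: "nat \<Rightarrow> tensor3 \<Rightarrow> real mat" where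
  "marg3 \<kappa> P = mat \<kappa> \<kappa> (\<lambda>(i,j). \<Sum>k<\<kappa>. P i j k)"
definition slice3 :: "nat \<Rightarrow> tensor3 \<Rightarrow> nat \<Rightarrow> real mat" where
  "slice3 \<kappa> P k = mat \<kappa> \<kappa> (\<lambda>(i,j). P i j k)"

definition Cof :: "real mat \<Rightarrow> real mat" where
  "Cof A = mat (dim_row A) (dim_col A) (\<lambda>(i,j). cofactor A i j)"

end

(*
  Undo the Markov actions: P = Pt * (A, B, C) on the cube, where A, B, C are the inverses of the
  Markov matrices and Pt is exchangeable in its first two indices. Because the rows of a Markov
  matrix sum to 1, the action on a summed-out index disappears, so P_{+..} = B^T T C and
  P_{.+.} = A^T T C with T = Pt_{+..}, while P_{..k} = A^T S B with S symmetric. The adjugate is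
  multiplicative as soon as one factor is invertible (T itself may be singular), so
  adj(A^T T C) = adj C adj T adj(A^T), and Q^a collapses to det A det C det T * B^T S B, which is
  symmetric; the transpose of Q^b has the same shape with A and B exchanged.
*)

theory Submission
  imports Defs
begin

lemma adj_mat_row_scalar_prod:
  assumes A: "A \<in> carrier_mat n n" and b: "b \<in> carrier_vec n" and i: "i < n"
  shows "row (adj_mat A) i \<bullet> b = det (replace_col A b i)"
proof -
  have "replace_col A b i \<in> carrier_mat n n" using A by (auto simp: replace_col_def)
  then show ?thesis unfolding scalar_prod_def using b i A
    by (subst laplace_expansion_column[of _ n i], auto intro!: sum.cong arg_cong[of _ _ det]
      arg_cong[of _ _ "\<lambda>x. _ * x"] eq_matI
      simp: replace_col_def adj_mat_def Matrix.row_def cofactor_def mat_delete_def ac_simps)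
qed

lemma replace_col_mult_left:
  assumes "X \<in> carrier_mat n n" "Y \<in> carrier_mat n n" "v \<in> carrier_vec n" "i < n"
  shows "replace_col (X * Y) (X *\<^sub>v v) i = X * replace_col Y v i"
proof -
  have "col (replace_col Y v i) j = (if j = i then v else col Y j)" if "j < n" for j
    using that assms by (auto simp: replace_col_def)
  with assms show ?thesis by (intro eq_matI) (auto simp: replace_col_def)
qed

lemma adj_mat_mult_invertible_left:
  fixes X Y :: "'a :: field mat"
  assumes X: "X \<in> carrier_mat n n" and Y: "Y \<in> carrier_mat n n" and dX: "det X \<noteq> 0"
  shows "adj_mat (X * Y) = adj_mat Y * adj_mat X"
proof (rule eq_matI)
  note aX = adj_mat[OF X] and aY = adj_mat(1)[OF Y]
  fix i j assume "i < dim_row (adj_mat Y * adj_mat X)" "j < dim_col (adj_mat Y * adj_mat X)"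
  with aX aY have i: "i < n" and j: "j < n" by auto
  define w where "w = col (adj_mat X) j"
  define v where "v = (1 / det X) \<cdot>\<^sub>v w"
  have w: "w \<in> carrier_vec n" and v: "v \<in> carrier_vec n"
    using aX j unfolding w_def v_def by auto
  \<comment> \<open>\<open>v\<close> is the \<open>j\<close>-th column of \<open>X\<^sup>-\<^sup>1\<close>; Cramer's rule for \<open>Y\<close> at \<open>v\<close> gives the entry.\<close>
  have "X *\<^sub>v w = det X \<cdot>\<^sub>v unit_vec n j"
    using col_mult2[OF X aX(1) j] aX(2) j unfolding w_def by auto
  with dX X w have Xv: "X *\<^sub>v v = unit_vec n j"
    unfolding v_def by (auto simp: mult_mat_vec)
  have "adj_mat (X * Y) $$ (i, j) = row (adj_mat (X * Y)) i \<bullet> unit_vec n j"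
    using adj_mat(1)[of "X * Y" n] X Y i j by auto
  also have "\<dots> = det (X * replace_col Y v i)"
    using adj_mat_row_scalar_prod[of "X * Y" n _ i] replace_col_mult_left[OF X Y v i] X Y i Xv
    by auto
  also have "\<dots> = det X * (row (adj_mat Y) i \<bullet> v)"
    using det_mult[OF X, of "replace_col Y v i"] adj_mat_row_scalar_prod[OF Y v i] Y
    by (auto simp: replace_col_def)
  also have "\<dots> = row (adj_mat Y) i \<bullet> w"
    using w aY i dX unfolding v_def by (auto simp: scalar_prod_smult_right)
  also have "\<dots> = (adj_mat Y * adj_mat X) $$ (i, j)"
    using aX aY i j unfolding w_def by auto
  finally show "adj_mat (X * Y) $$ (i, j) = (adj_mat Y * adj_mat X) $$ (i, j)" .
qed (use X Y in \<open>auto simp: adj_mat_def\<close>)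

lemma adj_mat_transpose:
  assumes A: "A \<in> carrier_mat n n"
  shows "adj_mat (transpose_mat A) = transpose_mat (adj_mat A)"
proof (rule eq_matI)
  fix i j assume "i < dim_row (transpose_mat (adj_mat A))" "j < dim_col (transpose_mat (adj_mat A))"
  with A have ij: "i < n" "j < n" by (auto simp: adj_mat_def)
  have "mat_delete (transpose_mat A) j i = transpose_mat (mat_delete A i j)"
    using A by (auto simp: mat_delete_def)
  then have "det (mat_delete (transpose_mat A) j i) = det (mat_delete A i j)"
    using A det_transpose[of "mat_delete A i j" "n - 1"] by (auto simp: mat_delete_def)
  then show "adj_mat (transpose_mat A) $$ (i, j) = transpose_mat (adj_mat A) $$ (i, j)"
    using ij A by (auto simp: adj_mat_def cofactor_def ac_simps)
qed (use A in \<open>auto simp: adj_mat_def\<close>)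

lemma adj_mat_mult:
  fixes X Y :: "'a :: field mat"
  assumes X: "X \<in> carrier_mat n n" and Y: "Y \<in> carrier_mat n n" and "det X \<noteq> 0 \<or> det Y \<noteq> 0"
  shows "adj_mat (X * Y) = adj_mat Y * adj_mat X"
  using assms(3)
proof
  assume "det Y \<noteq> 0"
  have "transpose_mat (adj_mat (X * Y)) = adj_mat (transpose_mat Y * transpose_mat X)"
    using X Y by (simp add: transpose_mult adj_mat_transpose[of "X * Y" n, symmetric])
  also have "\<dots> = adj_mat (transpose_mat X) * adj_mat (transpose_mat Y)"
    using X Y \<open>det Y \<noteq> 0\<close> by (intro adj_mat_mult_invertible_left) (auto simp: det_transpose)
  also have "\<dots> = transpose_mat (adj_mat Y * adj_mat X)"
    using X Y adj_mat(1)[OF X] adj_mat(1)[OF Y] by (simp add: adj_mat_transpose transpose_mult)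
  finally show ?thesis by (metis transpose_transpose)
qed (rule adj_mat_mult_invertible_left[OF X Y])

lemma smult_smult_mat: "a \<cdot>\<^sub>m (b \<cdot>\<^sub>m A) = (a * b :: 'a :: semigroup_mult) \<cdot>\<^sub>m A"
  by (rule eq_matI) (auto simp: mult.assoc)

lemma transpose_smult_mat: "transpose_mat (a \<cdot>\<^sub>m A) = a \<cdot>\<^sub>m transpose_mat A"
  by (rule eq_matI) auto

lemma mult_adj_mat_mult:
  fixes A :: "'a :: comm_ring_1 mat"
  assumes "A \<in> carrier_mat n n" "Z \<in> carrier_mat n m"
  shows "A * (adj_mat A * Z) = det A \<cdot>\<^sub>m Z" "adj_mat A * (A * Z) = det A \<cdot>\<^sub>m Z"
  using assms adj_mat[OF assms(1)]
  by (simp_all add: assoc_mult_mat[symmetric, of _ n n _ n _ m] mult_smult_assoc_mat[of _ n n Z m])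

lemma adj_mat_sandwich:
  fixes W V T C S :: "'a :: field mat"
  assumes W: "W \<in> carrier_mat n n" and V: "V \<in> carrier_mat n n" and T: "T \<in> carrier_mat n n"
    and C: "C \<in> carrier_mat n n" and S: "S \<in> carrier_mat n n"
    and dV: "det V \<noteq> 0" and dC: "det C \<noteq> 0"
  shows "transpose_mat W * T * C * adj_mat (transpose_mat V * T * C) * (transpose_mat V * S * W)
       = (det V * det C * det T) \<cdot>\<^sub>m (transpose_mat W * S * W)"
proof -
  let ?V = "transpose_mat V"
  have V': "?V \<in> carrier_mat n n" and dV': "det ?V \<noteq> 0" using V dV by (auto simp: det_transpose)
  note carriers = W V' T C S adj_mat(1)[OF V'] adj_mat(1)[OF T] adj_mat(1)[OF C]
  have "adj_mat (?V * T * C) = adj_mat C * (adj_mat T * adj_mat ?V)"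
    using carriers dV' dC by (simp add: adj_mat_mult[of _ n])
  then show ?thesis
    using carriers dV'
    by (simp add: assoc_mult_mat[of _ n n _ n _ n] mult_adj_mat_mult[where m = n]
        mult_smult_distrib[of _ n n _ n] mult_smult_assoc_mat[of _ n n _ n] smult_smult_mat
        det_transpose[OF V] ac_simps)
qed

lemma transpose_mat_mult3:
  fixes X S Y :: "'a :: comm_semiring_0 mat"
  assumes X: "X \<in> carrier_mat m n" and S: "S \<in> carrier_mat n p" and Y: "Y \<in> carrier_mat p q"
  shows "transpose_mat (X * S * Y) = transpose_mat Y * transpose_mat S * transpose_mat X"
proof -
  have "transpose_mat (X * S * Y) = transpose_mat Y * transpose_mat (X * S)"
    using X S Y by (intro transpose_mult) auto
  also have "\<dots> = transpose_mat Y * (transpose_mat S * transpose_mat X)"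
    using X S by (simp only: transpose_mult)
  finally show ?thesis
    using X S Y by (simp only: assoc_mult_mat[of "transpose_mat Y" q p "transpose_mat S" n "transpose_mat X" m]
        transpose_carrier_mat)
qed

lemma adj_mat_sandwich_symmetric:
  fixes W V T C S :: "'a :: field mat"
  assumes "W \<in> carrier_mat n n" "V \<in> carrier_mat n n" "T \<in> carrier_mat n n"
    "C \<in> carrier_mat n n" "S \<in> carrier_mat n n" "det V \<noteq> 0" "det C \<noteq> 0"
    and S_sym: "transpose_mat S = S"
  defines "X \<equiv> transpose_mat W * T * C * adj_mat (transpose_mat V * T * C) * (transpose_mat V * S * W)"
  shows "transpose_mat X = X"
proof -
  have "transpose_mat (transpose_mat W * S * W) = transpose_mat W * S * W"
    using transpose_mat_mult3[OF transpose_carrier_mat[THEN iffD2, OF assms(1)] assms(5,1)]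
    by (simp only: S_sym transpose_transpose)
  then show ?thesis
    unfolding X_def adj_mat_sandwich[OF assms(1-7)] transpose_smult_mat by (simp only:)
qed

lemma det_non_zero_right_inverse:
  fixes M :: "'a :: field mat"
  assumes M: "M \<in> carrier_mat n n" and "det M \<noteq> 0"
  obtains N where "N \<in> carrier_mat n n" "M * N = 1\<^sub>m n" "det N \<noteq> 0"
proof
  let ?N = "(1 / det M) \<cdot>\<^sub>m adj_mat M"
  show N: "?N \<in> carrier_mat n n" using adj_mat[OF M] by simp
  have "M * ?N = (1 / det M * det M) \<cdot>\<^sub>m 1\<^sub>m n"
    by (simp only: mult_smult_distrib[OF M adj_mat(1)[OF M]] adj_mat(2)[OF M] smult_smult_mat)
  then show MN: "M * ?N = 1\<^sub>m n"
    using assms by (auto intro!: eq_matI)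
  from arg_cong[OF MN, of det] have "det M * det ?N = 1"
    by (simp only: det_mult[OF M N] det_one)
  then show "det ?N \<noteq> 0" by (metis mult_zero_right zero_neq_one)
qed

lemma transpose_mult_cancel_right_inverses:
  fixes M A N B X :: "'a :: comm_semiring_1 mat"
  assumes "M \<in> carrier_mat n n" "A \<in> carrier_mat n n" "N \<in> carrier_mat n n" "B \<in> carrier_mat n n"
    "X \<in> carrier_mat n n" "M * A = 1\<^sub>m n" "N * B = 1\<^sub>m n"
  shows "transpose_mat A * (transpose_mat M * X * N) * B = X"
proof -
  have "transpose_mat A * transpose_mat M = 1\<^sub>m n"
    using transpose_mult[of M n n A n] assms by simp
  have "transpose_mat A * (transpose_mat M * X * N) * B
      = (transpose_mat A * transpose_mat M) * X * (N * B)"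
    using assms by (simp add: assoc_mult_mat[of _ n n _ n _ n])
  also have "\<dots> = X"
    using assms \<open>transpose_mat A * transpose_mat M = 1\<^sub>m n\<close> by simp
  finally show ?thesis .
qed

lemma Cof_eq_transpose_adj_mat: "A \<in> carrier_mat n n \<Longrightarrow> Cof A = transpose_mat (adj_mat A)"
  by (rule eq_matI) (auto simp: Cof_def adj_mat_def)

lemma transpose_mult_Cof_mult:
  assumes X: "X \<in> carrier_mat n n" and Y: "Y \<in> carrier_mat n n" and Z: "Z \<in> carrier_mat n n"
  shows "transpose_mat (X * Cof Y * transpose_mat Z) = Z * adj_mat Y * transpose_mat X"
proof -
  have "Cof Y \<in> carrier_mat n n" using Y by (simp add: Cof_def)
  with X Z have "transpose_mat (X * Cof Y * transpose_mat Z)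
      = transpose_mat (transpose_mat Z) * transpose_mat (Cof Y) * transpose_mat X"
    by (intro transpose_mat_mult3) auto
  then show ?thesis by (simp only: Cof_eq_transpose_adj_mat[OF Y] transpose_transpose)
qed

lemma Cof_sandwich_products_symmetric:
  fixes A B C T S :: "real mat"
  assumes carriers: "A \<in> carrier_mat n n" "B \<in> carrier_mat n n" "C \<in> carrier_mat n n"
      "T \<in> carrier_mat n n" "S \<in> carrier_mat n n"
    and dets: "det A \<noteq> 0" "det B \<noteq> 0" "det C \<noteq> 0" and S_sym: "transpose_mat S = S"
    and X: "X = transpose_mat B * T * C" and Y: "Y = transpose_mat A * T * C"
    and Z: "Z = transpose_mat A * S * B"
  shows "transpose_mat (X * transpose_mat (Cof Y) * Z) = X * transpose_mat (Cof Y) * Z"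
    and "transpose_mat (Z * Cof X * transpose_mat Y) = Z * Cof X * transpose_mat Y"
proof -
  have XYZ: "X \<in> carrier_mat n n" "Y \<in> carrier_mat n n" "Z \<in> carrier_mat n n"
    using carriers unfolding X Y Z by auto
  have "X * transpose_mat (Cof Y) * Z = X * adj_mat Y * Z"
    by (simp only: Cof_eq_transpose_adj_mat[OF XYZ(2)] transpose_transpose)
  also have "\<dots> = transpose_mat B * T * C * adj_mat (transpose_mat A * T * C) * (transpose_mat A * S * B)"
    unfolding X Y Z ..
  finally show "transpose_mat (X * transpose_mat (Cof Y) * Z) = X * transpose_mat (Cof Y) * Z"
    using adj_mat_sandwich_symmetric[OF carriers(2,1,4,3,5) dets(1,3) S_sym] by (simp only:)
  have Z_T: "transpose_mat Z = transpose_mat B * S * A"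
    unfolding Z using transpose_mat_mult3[OF transpose_carrier_mat[THEN iffD2, OF carriers(1)] carriers(5,2)]
    by (simp only: S_sym transpose_transpose)
  have "transpose_mat (Z * Cof X * transpose_mat Y) = Y * adj_mat X * transpose_mat Z"
    by (rule transpose_mult_Cof_mult[OF XYZ(3,1,2)])
  also have "\<dots> = transpose_mat A * T * C * adj_mat (transpose_mat B * T * C) * (transpose_mat B * S * A)"
    unfolding Z_T X Y ..
  finally have "transpose_mat (transpose_mat (Z * Cof X * transpose_mat Y))
      = transpose_mat (Z * Cof X * transpose_mat Y)"
    using adj_mat_sandwich_symmetric[OF carriers(1,2,4,3,5) dets(2,3) S_sym] by (simp only:)
  then show "transpose_mat (Z * Cof X * transpose_mat Y) = Z * Cof X * transpose_mat Y"
    by (simp only: transpose_transpose)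
qed

lemma marg1_act2:
  assumes "M \<in> carrier_mat n n"
  shows "marg1 n (act2 n Q M) = transpose_mat M * marg1 n Q"
  using assms by (intro eq_matI) (auto simp: marg1_def act2_def scalar_prod_def atLeast0LessThan
      sum_distrib_left sum_distrib_right mult_ac intro: sum.swap)

lemma marg1_act3:
  assumes "M \<in> carrier_mat n n"
  shows "marg1 n (act3 n Q M) = marg1 n Q * M"
  using assms by (intro eq_matI) (auto simp: marg1_def act3_def scalar_prod_def atLeast0LessThan
      sum_distrib_left sum_distrib_right mult_ac intro: sum.swap)

lemma marg1_act1:
  assumes "\<forall>l<n. (\<Sum>i<n. M $$ (l, i)) = 1"
  shows "marg1 n (act1 n Q M) = marg1 n Q"
  using assms by (intro eq_matI) (auto simp: marg1_def act1_def sum_distrib_left[symmetric]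
      intro: trans[OF sum.swap])

lemma marg2_act1:
  assumes "M \<in> carrier_mat n n"
  shows "marg2 n (act1 n Q M) = transpose_mat M * marg2 n Q"
  using assms by (intro eq_matI) (auto simp: marg2_def act1_def scalar_prod_def atLeast0LessThan
      sum_distrib_left sum_distrib_right mult_ac intro: sum.swap)

lemma marg2_act2:
  assumes "\<forall>l<n. (\<Sum>j<n. M $$ (l, j)) = 1"
  shows "marg2 n (act2 n Q M) = marg2 n Q"
  using assms by (intro eq_matI) (auto simp: marg2_def act2_def sum_distrib_left[symmetric]
      intro: trans[OF sum.swap])

lemma marg2_act3:
  assumes "M \<in> carrier_mat n n"
  shows "marg2 n (act3 n Q M) = marg2 n Q * M"
  using assms by (intro eq_matI) (auto simp: marg2_def act3_def scalar_prod_def atLeast0LessThan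
      sum_distrib_left sum_distrib_right mult_ac intro: sum.swap)

lemma slice3_act1:
  assumes "M \<in> carrier_mat n n"
  shows "slice3 n (act1 n Q M) k = transpose_mat M * slice3 n Q k"
  using assms by (intro eq_matI) (auto simp: slice3_def act1_def scalar_prod_def atLeast0LessThan mult_ac)

lemma slice3_act2:
  assumes "M \<in> carrier_mat n n"
  shows "slice3 n (act2 n Q M) k = slice3 n Q k * M"
  using assms by (intro eq_matI) (auto simp: slice3_def act2_def scalar_prod_def atLeast0LessThan mult_ac)

lemma act3_act3:
  assumes "M \<in> carrier_mat n n" "N \<in> carrier_mat n n" "k < n"
  shows "act3 n (act3 n Q M) N i j k = act3 n Q (M * N) i j k"
  using assms by (auto simp: act3_def scalar_prod_def atLeast0LessThan
      sum_distrib_left sum_distrib_right mult_ac intro: sum.swap)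

lemma act3_one:
  assumes "k < n"
  shows "act3 n Q (1\<^sub>m n) i j k = Q i j k"
  using assms by (simp add: act3_def one_mat_def if_distrib cong: if_cong)

lemma marg1_act_all:
  assumes "markov_mat n M1" "M2 \<in> carrier_mat n n" "M3 \<in> carrier_mat n n"
  shows "marg1 n (act_all n Q M1 M2 M3) = transpose_mat M2 * marg1 n Q * M3"
  using assms by (simp add: act_all_def markov_mat_def marg1_act1 marg1_act2 marg1_act3)

lemma marg2_act_all:
  assumes "M1 \<in> carrier_mat n n" "markov_mat n M2" "M3 \<in> carrier_mat n n"
  shows "marg2 n (act_all n Q M1 M2 M3) = transpose_mat M1 * marg2 n Q * M3"
  using assms by (simp add: act_all_def markov_mat_def marg2_act1 marg2_act2 marg2_act3)

lemma slice3_act3_act_all: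
  assumes "M1 \<in> carrier_mat n n" "M2 \<in> carrier_mat n n" "M3 \<in> carrier_mat n n"
    and "C \<in> carrier_mat n n" "M3 * C = 1\<^sub>m n" "k < n"
  shows "slice3 n (act3 n (act_all n Q M1 M2 M3) C) k = transpose_mat M1 * slice3 n Q k * M2"
proof -
  have "slice3 n (act3 n (act_all n Q M1 M2 M3) C) k = slice3 n (act2 n (act1 n Q M1) M2) k"
    using assms by (auto intro!: eq_matI simp: slice3_def act_all_def act3_act3 act3_one)
  then show ?thesis
    using assms by (simp add: slice3_act1 slice3_act2)
qed

lemma cube_agreement_cong:
  assumes "\<forall>i<n. \<forall>j<n. \<forall>k<n. Q i j k = R i j k"
  shows "marg1 n Q = marg1 n R" "marg2 n Q = marg2 n R"
    "slice3 n (act3 n Q M) k = slice3 n (act3 n R M) k"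
  using assms by (auto intro!: eq_matI sum.cong simp: marg1_def marg2_def slice3_def act3_def)

lemma exchangeable_marg2_eq_marg1:
  assumes "\<forall>i<n. \<forall>j<n. \<forall>k<n. Q i j k = Q j i k"
  shows "marg2 n Q = marg1 n Q"
  using assms by (auto intro!: eq_matI sum.cong simp: marg1_def marg2_def)

lemma exchangeable_slice3_symmetric:
  assumes "\<forall>i<n. \<forall>j<n. \<forall>k<n. Q i j k = Q j i k"
  shows "transpose_mat (slice3 n (act3 n Q M) k) = slice3 n (act3 n Q M) k"
  using assms by (auto intro!: eq_matI sum.cong simp: slice3_def act3_def)

lemma EE_abc_decomposition:
  assumes "EE_abc n P" "k < n"
  obtains A B C T S where
    "A \<in> carrier_mat n n" "B \<in> carrier_mat n n" "C \<in> carrier_mat n n"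
    "T \<in> carrier_mat n n" "S \<in> carrier_mat n n"
    "det A \<noteq> 0" "det B \<noteq> 0" "det C \<noteq> 0" "transpose_mat S = S"
    "marg1 n P = transpose_mat B * T * C" "marg2 n P = transpose_mat A * T * C"
    "slice3 n P k = transpose_mat A * S * B"
proof -
  obtain M1 M2 M3 Pt where M: "markov_mat n M1" "markov_mat n M2" "markov_mat n M3"
    and dM: "det M1 \<noteq> 0" "det M2 \<noteq> 0" "det M3 \<noteq> 0" and UE: "UE_abc n Pt"
    and Pt: "\<forall>i<n. \<forall>j<n. \<forall>k<n. act_all n P M1 M2 M3 i j k = Pt i j k"
    using assms(1) unfolding EE_abc_def by blast
  have Mc: "M1 \<in> carrier_mat n n" "M2 \<in> carrier_mat n n" "M3 \<in> carrier_mat n n"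
    using M unfolding markov_mat_def by auto
  obtain A B C where A: "A \<in> carrier_mat n n" "M1 * A = 1\<^sub>m n" "det A \<noteq> 0"
    and B: "B \<in> carrier_mat n n" "M2 * B = 1\<^sub>m n" "det B \<noteq> 0"
    and C: "C \<in> carrier_mat n n" "M3 * C = 1\<^sub>m n" "det C \<noteq> 0"
    using det_non_zero_right_inverse Mc dM by metis
  have exch: "\<forall>i<n. \<forall>j<n. \<forall>k<n. Pt i j k = Pt j i k"
    using UE unfolding UE_abc_def by auto
  define T where "T = marg1 n Pt"
  define S where "S = slice3 n (act3 n Pt C) k"
  have T: "T \<in> carrier_mat n n" and S: "S \<in> carrier_mat n n"
    unfolding T_def S_def marg1_def slice3_def by auto
  have "T = transpose_mat M2 * marg1 n P * M3"
    unfolding T_def cube_agreement_cong(1)[OF Pt, symmetric] using M Mc by (simp add: marg1_act_all)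
  then have marg1: "marg1 n P = transpose_mat B * T * C"
    using A B C Mc by (simp add: transpose_mult_cancel_right_inverses marg1_def)
  have "T = transpose_mat M1 * marg2 n P * M3"
    unfolding T_def exchangeable_marg2_eq_marg1[OF exch, symmetric]
      cube_agreement_cong(2)[OF Pt, symmetric] using M Mc by (simp add: marg2_act_all)
  then have marg2: "marg2 n P = transpose_mat A * T * C"
    using A B C Mc by (simp add: transpose_mult_cancel_right_inverses marg2_def)
  have "S = transpose_mat M1 * slice3 n P k * M2"
    unfolding S_def cube_agreement_cong(3)[OF Pt, symmetric]
    using Mc C assms(2) by (simp add: slice3_act3_act_all)
  then have slice: "slice3 n P k = transpose_mat A * S * B"
    using A B Mc by (simp add: transpose_mult_cancel_right_inverses slice3_def)
  have "transpose_mat S = S"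
    unfolding S_def by (rule exchangeable_slice3_symmetric[OF exch])
  from that[OF A(1) B(1) C(1) T S A(3) B(3) C(3) this marg1 marg2 slice] show ?thesis .
qed

theorem proposition6p1:
  fixes \<kappa> :: nat and P :: tensor3 and k :: nat
  assumes "\<kappa> \<ge> 2" and "EE_abc \<kappa> P" and "k < \<kappa>"
  shows "transpose_mat (marg1 \<kappa> P * transpose_mat (Cof (marg2 \<kappa> P)) * slice3 \<kappa> P k)
           = marg1 \<kappa> P * transpose_mat (Cof (marg2 \<kappa> P)) * slice3 \<kappa> P k
       \<and> transpose_mat (slice3 \<kappa> P k * Cof (marg1 \<kappa> P) * transpose_mat (marg2 \<kappa> P))
           = slice3 \<kappa> P k * Cof (marg1 \<kappa> P) * transpose_mat (marg2 \<kappa> P)"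
proof -
  obtain A B C T S where "A \<in> carrier_mat \<kappa> \<kappa>" "B \<in> carrier_mat \<kappa> \<kappa>" "C \<in> carrier_mat \<kappa> \<kappa>"
      "T \<in> carrier_mat \<kappa> \<kappa>" "S \<in> carrier_mat \<kappa> \<kappa>" "det A \<noteq> 0" "det B \<noteq> 0" "det C \<noteq> 0"
      "transpose_mat S = S" "marg1 \<kappa> P = transpose_mat B * T * C"
      "marg2 \<kappa> P = transpose_mat A * T * C" "slice3 \<kappa> P k = transpose_mat A * S * B"
    by (rule EE_abc_decomposition[OF assms(2,3)])
  from Cof_sandwich_products_symmetric[OF this] show ?thesis ..
qed

end
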